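(* Let $\alpha>-1$, let $\phi(z)=\lambda z$ with $\lambda\ne0$ (so $0<|\lambda|\le1$), and let $\psi(z)=\sum_{k=1}^\infty\hat\psi_kz^k$ be analytic on $\mathbb{D}$ (so $\psi(0)=0$), with $C_{\psi,\phi}$ bounded on $L^2_a(dA_\alpha)$. Then for every integer $m\ge2$, $W(C_{\psi,\phi})$ contains the closed disc centred at the origin with radius $\dfrac12\sqrt{\dfrac{m!\,\Gamma(\alpha+3)}{\Gamma(m+\alpha+2)}}\,|\lambda\hat\psi_{m-1}|$.
   Context: $\mathbb{D}$ is the open unit disc. $L^2_a(dA_\alpha)$ is the weighted Bergman space of analytic $f$ on $\mathbb{D}$ with $\int_{\mathbb{D}}|f|^2dA_\alpha<\infty$, $dA_{\alpha}(z)=(\alpha+1)(1-|z|^2)^{\alpha}dA(z)$, $dA$ normalized area measure. $C_{\psi,\phi}f=\psi\cdot(f\circ\phi)$. $W(T)=\{\langle Tf,f\rangle:\|f\|=1\}$. *)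

theory Defs
  imports "HOL-Analysis.Analysis"
begin

definition dA :: "real \<Rightarrow> complex measure" where
  "dA \<alpha> = density lborel
     (\<lambda>z. ennreal (indicator (ball 0 1) z * ((\<alpha> + 1) * (1 - (cmod z)\<^sup>2) powr \<alpha> / pi)))"

definition bergman :: "real \<Rightarrow> (complex \<Rightarrow> complex) set" where
  "bergman \<alpha> = {f. f holomorphic_on ball 0 1 \<and> integrable (dA \<alpha>) (\<lambda>z. (cmod (f z))\<^sup>2)}"

definition binner :: "real \<Rightarrow> (complex \<Rightarrow> complex) \<Rightarrow> (complex \<Rightarrow> complex) \<Rightarrow> complex" where
  "binner \<alpha> f g = integral\<^sup>L (dA \<alpha>) (\<lambda>z. f z * cnj (g z))"

definition bnorm :: "real \<Rightarrow> (complex \<Rightarrow> complex) \<Rightarrow> real" where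
  "bnorm \<alpha> f = sqrt (integral\<^sup>L (dA \<alpha>) (\<lambda>z. (cmod (f z))\<^sup>2))"

definition wcomp :: "(complex \<Rightarrow> complex) \<Rightarrow> (complex \<Rightarrow> complex) \<Rightarrow> (complex \<Rightarrow> complex) \<Rightarrow> (complex \<Rightarrow> complex)" where
  "wcomp \<psi> \<phi> f = (\<lambda>z. \<psi> z * f (\<phi> z))"

definition wcomp_bounded :: "real \<Rightarrow> (complex \<Rightarrow> complex) \<Rightarrow> (complex \<Rightarrow> complex) \<Rightarrow> bool" where
  "wcomp_bounded \<alpha> \<psi> \<phi> \<longleftrightarrow>
     (\<forall>f\<in>bergman \<alpha>. wcomp \<psi> \<phi> f \<in> bergman \<alpha>) \<and>
     (\<exists>M. \<forall>f\<in>bergman \<alpha>. bnorm \<alpha> (wcomp \<psi> \<phi> f) \<le> M * bnorm \<alpha> f)"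

definition numrange :: "real \<Rightarrow> ((complex \<Rightarrow> complex) \<Rightarrow> (complex \<Rightarrow> complex)) \<Rightarrow> complex set" where
  "numrange \<alpha> T = {binner \<alpha> (T f) f | f. f \<in> bergman \<alpha> \<and> bnorm \<alpha> f = 1}"

definition taylor_coeff :: "(complex \<Rightarrow> complex) \<Rightarrow> nat \<Rightarrow> complex" where
  "taylor_coeff f k = (deriv ^^ k) f 0 / of_nat (fact k)"

end

theory Submission
  imports Defs "HOL-Complex_Analysis.Complex_Analysis"
begin

text \<open>The normalised monomials \<open>e\<^sub>k = z\<^sup>k / \<parallel>z\<^sup>k\<parallel>\<close> are orthonormal in \<open>L\<^sup>2\<^sub>a(dA\<^sub>\<alpha>)\<close>,
  because \<open>dA\<^sub>\<alpha>\<close> is rotation invariant, and \<open>\<parallel>z\<^sup>k\<parallel>\<^sup>2 = k! \<Gamma>(\<alpha> + 2) / \<Gamma>(k + \<alpha> + 2)\<close> is a Beta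
  integral. Integrating the Taylor series of \<open>\<psi>\<close> termwise gives
  \<open>\<langle>\<psi> z\<^sup>j, z\<^sup>k\<rangle> = \<psi>\<^sub>k\<^sub>-\<^sub>j \<parallel>z\<^sup>k\<parallel>\<^sup>2\<close> for \<open>j \<le> k\<close> and \<open>0\<close> otherwise. For \<open>f = a e\<^sub>1 + b e\<^sub>m\<close> with
  \<open>|a|\<^sup>2 + |b|\<^sup>2 = 1\<close> the condition \<open>\<psi>(0) = 0\<close> kills every term of \<open>\<langle>C\<^sub>\<psi>\<^sub>,\<^sub>\<phi> f, f\<rangle>\<close> except
  \<open>a cnj(b) \<lambda> \<psi>\<^sub>m\<^sub>-\<^sub>1 \<parallel>z\<^sup>m\<parallel> / \<parallel>z\<parallel>\<close>, and \<open>a cnj(b)\<close> ranges over the closed disc of radius \<open>1/2\<close>.\<close>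

section \<open>Rotation invariance of Lebesgue measure on the plane\<close>

lemma sets_borel_ball [measurable]: "ball c r \<in> sets borel"
  by simp

lemma borel_measurable_Complex_pair:
  "(\<lambda>p. Complex (fst p) (snd p)) \<in> borel_measurable (lborel \<Otimes>\<^sub>M (lborel::real measure))"
proof -
  have "continuous_on UNIV (\<lambda>p::real\<times>real. Complex (fst p) (snd p))"
    unfolding Complex_eq by (intro continuous_intros)
  then show ?thesis
    by (simp add: lborel_prod borel_measurable_continuous_onI)
qed

lemma lborel_complex_eq_distr_pair:
  "(lborel :: complex measure) = distr (lborel \<Otimes>\<^sub>M lborel) borel (\<lambda>p. Complex (fst p) (snd p))"
proof (rule lborel_eqI)
  fix l u :: complex
  assume le: "\<And>b. b \<in> Basis \<Longrightarrow> l \<bullet> b \<le> u \<bullet> b"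
  have "Re l \<le> Re u" "Im l \<le> Im u"
    using le[of 1] le[of \<i>] by (auto simp: Basis_complex_def)
  moreover have "(\<lambda>p. Complex (fst p) (snd p)) -` box l u \<inter> space (lborel \<Otimes>\<^sub>M lborel)
      = {Re l<..<Re u} \<times> {Im l<..<Im u}"
    by (auto simp: box_def Basis_complex_def space_pair_measure)
  ultimately show "emeasure (distr (lborel \<Otimes>\<^sub>M lborel) borel (\<lambda>p. Complex (fst p) (snd p))) (box l u)
      = (\<Prod>b\<in>Basis. (u - l) \<bullet> b)"
    using borel_measurable_Complex_pair
    by (simp add: emeasure_distr lborel.emeasure_pair_measure_Times Basis_complex_def ennreal_mult)
qed simp

lemma nn_integral_lborel_complex:
  fixes f :: "complex \<Rightarrow> ennreal"
  assumes "f \<in> borel_measurable borel"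
  shows "(\<integral>\<^sup>+z. f z \<partial>lborel) = (\<integral>\<^sup>+p. f (Complex (fst p) (snd p)) \<partial>(lborel \<Otimes>\<^sub>M lborel))"
  using assms borel_measurable_Complex_pair
  by (subst lborel_complex_eq_distr_pair) (simp add: nn_integral_distr)

text \<open>The rotation is integrated one coordinate at a time: for fixed \<open>x\<close> the substitution
  \<open>y \<mapsto> s x + c y\<close> is affine in \<open>y\<close>, and afterwards the substitution in \<open>x\<close> is affine too.\<close>
lemma nn_integral_lborel_pair_rotation:
  fixes f :: "real \<times> real \<Rightarrow> ennreal" and c s :: real
  assumes f[measurable]: "f \<in> borel_measurable (lborel \<Otimes>\<^sub>M lborel)"
    and "c \<noteq> 0" and "c\<^sup>2 + s\<^sup>2 = 1"
  shows "(\<integral>\<^sup>+p. f (c * fst p - s * snd p, s * fst p + c * snd p) \<partial>(lborel \<Otimes>\<^sub>M lborel))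
       = (\<integral>\<^sup>+p. f p \<partial>(lborel \<Otimes>\<^sub>M lborel))"
proof -
  let ?F = "\<lambda>x y. f (c * x - s * y, s * x + c * y)"
  let ?G = "\<lambda>x v. f (x / c - s * v / c, v)"
  have inner: "(\<integral>\<^sup>+y. ?F x y \<partial>lborel) = ennreal (1 / \<bar>c\<bar>) * (\<integral>\<^sup>+v. ?G x v \<partial>lborel)" for x
  proof -
    have "(\<integral>\<^sup>+y. ?F x y \<partial>lborel) = ennreal \<bar>1 / c\<bar> * (\<integral>\<^sup>+v. ?F x (- s * x / c + v / c) \<partial>lborel)"
      using \<open>c \<noteq> 0\<close> nn_integral_real_affine[of "?F x" "1 / c" "- s * x / c"] by simp
    also have "(\<lambda>v. ?F x (- s * x / c + v / c)) = ?G x"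
    proof
      fix v
      have "c * x - s * (- s * x / c + v / c) = (c\<^sup>2 + s\<^sup>2) * x / c - s * v / c"
        using \<open>c \<noteq> 0\<close> by (simp add: field_simps power2_eq_square)
      then show "?F x (- s * x / c + v / c) = ?G x v"
        using \<open>c \<noteq> 0\<close> \<open>c\<^sup>2 + s\<^sup>2 = 1\<close> by (simp add: field_simps)
    qed
    finally show ?thesis by simp
  qed
  have outer: "(\<integral>\<^sup>+x. ?G x v \<partial>lborel) = ennreal \<bar>c\<bar> * (\<integral>\<^sup>+u. f (u, v) \<partial>lborel)" for v
  proof -
    have "(\<integral>\<^sup>+x. ?G x v \<partial>lborel) = ennreal \<bar>c\<bar> * (\<integral>\<^sup>+u. ?G (s * v + c * u) v \<partial>lborel)"
      using \<open>c \<noteq> 0\<close> by (intro nn_integral_real_affine) auto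
    also have "(\<lambda>u. ?G (s * v + c * u) v) = (\<lambda>u. f (u, v))"
      using \<open>c \<noteq> 0\<close> by (simp add: field_simps)
    finally show ?thesis .
  qed
  have "(\<integral>\<^sup>+p. f (c * fst p - s * snd p, s * fst p + c * snd p) \<partial>(lborel \<Otimes>\<^sub>M lborel))
      = (\<integral>\<^sup>+x. ennreal (1 / \<bar>c\<bar>) * (\<integral>\<^sup>+v. ?G x v \<partial>lborel) \<partial>lborel)"
    by (simp add: lborel.nn_integral_fst[symmetric] inner)
  also have "\<dots> = ennreal (1 / \<bar>c\<bar>) * (\<integral>\<^sup>+v. \<integral>\<^sup>+x. ?G x v \<partial>lborel \<partial>lborel)"
    by (subst nn_integral_cmult)
      (simp_all add: lborel_pair.Fubini[symmetric, where f="\<lambda>p. ?G (fst p) (snd p)", simplified])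
  also have "\<dots> = ennreal (1 / \<bar>c\<bar>) * (ennreal \<bar>c\<bar> * (\<integral>\<^sup>+p. f p \<partial>(lborel \<Otimes>\<^sub>M lborel)))"
    by (simp add: outer nn_integral_cmult lborel_pair.nn_integral_snd)
  finally show ?thesis
    using \<open>c \<noteq> 0\<close> by (simp add: mult.assoc[symmetric] ennreal_mult[symmetric])
qed

lemma nn_integral_lborel_rotation:
  fixes f :: "complex \<Rightarrow> ennreal"
  assumes f[measurable]: "f \<in> borel_measurable borel" and "cmod w = 1"
  shows "(\<integral>\<^sup>+z. f (w * z) \<partial>lborel) = (\<integral>\<^sup>+z. f z \<partial>lborel)"
proof -
  have rotation_Re_nonzero: "(\<integral>\<^sup>+z. g (u * z) \<partial>lborel) = (\<integral>\<^sup>+z. g z \<partial>lborel)"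
    if g[measurable]: "g \<in> borel_measurable borel" and "cmod u = 1" "Re u \<noteq> 0" for g u
  proof -
    have "(Re u)\<^sup>2 + (Im u)\<^sup>2 = 1"
      using \<open>cmod u = 1\<close> cmod_power2[of u] by simp
    moreover have "u * Complex x y = Complex (Re u * x - Im u * y) (Im u * x + Re u * y)" for x y
      by (simp add: complex_eq_iff)
    moreover have "(\<lambda>p. g (Complex (fst p) (snd p))) \<in> borel_measurable (lborel \<Otimes>\<^sub>M lborel)"
      using borel_measurable_Complex_pair by measurable
    ultimately show ?thesis
      using nn_integral_lborel_pair_rotation[of "\<lambda>p. g (Complex (fst p) (snd p))" "Re u" "Im u"]
        \<open>Re u \<noteq> 0\<close>
      by (simp add: nn_integral_lborel_complex)
  qed
  show ?thesis
  proof (cases "Re w = 0")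
    case True
    text \<open>Then \<open>w = \<plusminus>\<i>\<close>, a quarter turn: it is the square of an eighth turn.\<close>
    define u where "u = csqrt w"
    have "w = u * u"
      unfolding u_def power2_eq_square[symmetric] by simp
    have "cmod u = 1"
      using \<open>cmod w = 1\<close> by (simp add: u_def)
    have "Re u \<noteq> 0"
    proof
      assume "Re u = 0"
      then have "w = - complex_of_real ((Im u)\<^sup>2)"
        using \<open>w = u * u\<close> by (simp add: complex_eq_iff power2_eq_square)
      then show False
        using True \<open>cmod w = 1\<close> by simp
    qed
    have "(\<integral>\<^sup>+z. f (w * z) \<partial>lborel) = (\<integral>\<^sup>+z. f (u * (u * z)) \<partial>lborel)"
      by (simp add: \<open>w = u * u\<close> mult.assoc)
    also have "\<dots> = (\<integral>\<^sup>+z. f (u * z) \<partial>lborel)"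
      using rotation_Re_nonzero[of "\<lambda>z. f (u * z)" u] \<open>cmod u = 1\<close> \<open>Re u \<noteq> 0\<close> by simp
    also have "\<dots> = (\<integral>\<^sup>+z. f z \<partial>lborel)"
      using rotation_Re_nonzero[of f u] \<open>cmod u = 1\<close> \<open>Re u \<noteq> 0\<close> by simp
    finally show ?thesis .
  qed (use \<open>cmod w = 1\<close> rotation_Re_nonzero in simp)
qed

section \<open>Radial integrals over the unit disc\<close>

lemma emeasure_unit_disc_norm_sq_greater:
  "emeasure lborel (ball (0::complex) 1 \<inter> {z. x < (cmod z)\<^sup>2}) = ennreal (pi * (1 - min 1 (max 0 x)))"
proof -
  have disc: "emeasure lborel (cball (0::complex) r) = ennreal (pi * r\<^sup>2)"
    "emeasure lborel (ball (0::complex) r) = ennreal (pi * r\<^sup>2)" if "r \<ge> 0" for r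
    using that emeasure_cball[of r "0::complex"] emeasure_ball[of r "0::complex"]
    by (simp_all add: eval_unit_ball_vol mult.commute)
  consider "x < 0" | "0 \<le> x" "x < 1" | "1 \<le> x" by linarith
  then show ?thesis
  proof cases
    case 1
    then have "ball (0::complex) 1 \<inter> {z. x < (cmod z)\<^sup>2} = ball 0 1"
      by (auto intro: less_le_trans[of _ 0])
    then show ?thesis using 1 disc(2)[of 1] by simp
  next
    case 2
    have "x < (cmod z)\<^sup>2 \<longleftrightarrow> sqrt x < cmod z" for z :: complex
      using real_sqrt_less_iff[of x "(cmod z)\<^sup>2"] by simp
    then have "ball (0::complex) 1 \<inter> {z. x < (cmod z)\<^sup>2} = ball 0 1 - cball 0 (sqrt x)"
      by (simp only: set_eq_iff Int_iff mem_Collect_eq Diff_iff mem_cball_0 not_le simp_thms)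
    moreover have "cball (0::complex) (sqrt x) \<subseteq> ball 0 1"
      using \<open>x < 1\<close> by (simp add: cball_subset_ball_iff)
    ultimately have "emeasure lborel (ball (0::complex) 1 \<inter> {z. x < (cmod z)\<^sup>2})
        = emeasure lborel (ball (0::complex) 1) - emeasure lborel (cball (0::complex) (sqrt x))"
      using emeasure_lborel_cball_finite[of "0::complex" "sqrt x"]
      by (simp add: emeasure_Diff less_top)
    also have "\<dots> = ennreal (pi * (1 - x))"
      using 2 disc[of "sqrt x"] disc(2)[of 1] by (simp add: ennreal_minus algebra_simps)
    finally show ?thesis using 2 by simp
  next
    case 3
    have "(cmod z)\<^sup>2 < 1" if "cmod z < 1" for z :: complex
      using that by (simp add: abs_square_less_1)
    then have "ball (0::complex) 1 \<inter> {z. x < (cmod z)\<^sup>2} = {}"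
      using 3 by force
    then show ?thesis using 3 by simp
  qed
qed

text \<open>The push-forward of area measure on the unit disc under \<open>z \<mapsto> |z|\<^sup>2\<close> is \<open>\<pi>\<close> times
  Lebesgue measure on \<open>(0, 1)\<close>: both give \<open>{x<..}\<close> the mass \<open>\<pi> (1 - x)\<close> for \<open>0 \<le> x \<le> 1\<close>.\<close>
lemma distr_unit_disc_norm_sq:
  "distr (density lborel (indicator (ball (0::complex) 1))) borel (\<lambda>z. (cmod z)\<^sup>2)
     = density lborel (\<lambda>s. ennreal pi * indicator {0<..<1} s)"
proof (rule measure_eqI_lessThan)
  fix x :: real
  have "emeasure lborel ({0<..<1} \<inter> {x<..}) = ennreal (1 - min 1 (max 0 x))"
  proof -
    consider "x < 0" | "0 \<le> x" "x < 1" | "1 \<le> x" by linarith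
    then show ?thesis
    proof cases
      case 1
      then have "{0<..<1} \<inter> {x<..} = {0<..<(1::real)}" by auto
      then show ?thesis using 1 by simp
    next
      case 2
      then have "{0<..<1} \<inter> {x<..} = {x<..<(1::real)}" by auto
      then show ?thesis using 2 by simp
    next
      case 3
      then have "{0<..<1} \<inter> {x<..} = ({}::real set)" by auto
      then show ?thesis using 3 by simp
    qed
  qed
  moreover have "emeasure (density lborel (\<lambda>s. ennreal pi * indicator {0<..<1} s)) {x<..}
      = (\<integral>\<^sup>+s. ennreal pi * indicator ({0<..<1} \<inter> {x<..}) s \<partial>lborel)"
    by (subst emeasure_density) (auto intro!: nn_integral_cong simp: indicator_def)
  ultimately have "emeasure (density lborel (\<lambda>s. ennreal pi * indicator {0<..<1} s)) {x<..}
      = ennreal (pi * (1 - min 1 (max 0 x)))"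
    by (simp add: nn_integral_cmult_indicator ennreal_mult)
  moreover have "emeasure (distr (density lborel (indicator (ball (0::complex) 1))) borel
      (\<lambda>z. (cmod z)\<^sup>2)) {x<..} = emeasure lborel (ball (0::complex) 1 \<inter> {z. x < (cmod z)\<^sup>2})"
    by (simp add: emeasure_distr emeasure_restricted vimage_def Int_def)
  ultimately show "emeasure (distr (density lborel (indicator (ball (0::complex) 1))) borel
      (\<lambda>z. (cmod z)\<^sup>2)) {x<..} = emeasure (density lborel (\<lambda>s. ennreal pi * indicator {0<..<1} s)) {x<..}"
    and "emeasure (distr (density lborel (indicator (ball (0::complex) 1))) borel
      (\<lambda>z. (cmod z)\<^sup>2)) {x<..} < \<infinity>"
    by (simp_all add: emeasure_unit_disc_norm_sq_greater)
qed simp_all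

lemma nn_integral_unit_disc_radial:
  fixes g :: "real \<Rightarrow> ennreal"
  assumes [measurable]: "g \<in> borel_measurable borel"
  shows "(\<integral>\<^sup>+z. indicator (ball (0::complex) 1) z * g ((cmod z)\<^sup>2) \<partial>lborel)
       = ennreal pi * (\<integral>\<^sup>+s. indicator {0<..<1} s * g s \<partial>lborel)"
proof -
  have "(\<integral>\<^sup>+z. indicator (ball (0::complex) 1) z * g ((cmod z)\<^sup>2) \<partial>lborel)
      = (\<integral>\<^sup>+s. g s \<partial>distr (density lborel (indicator (ball (0::complex) 1))) borel (\<lambda>z. (cmod z)\<^sup>2))"
    by (subst nn_integral_distr, simp_all, subst nn_integral_density, auto intro: borel_measurable_indicator)
  also have "\<dots> = ennreal pi * (\<integral>\<^sup>+s. indicator {0<..<1} s * g s \<partial>lborel)"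
    by (simp add: distr_unit_disc_norm_sq nn_integral_density nn_integral_cmult mult.assoc)
  finally show ?thesis .
qed

section \<open>The weighted area measure and its moments\<close>

lemma sets_dA [simp, measurable_cong]: "sets (dA \<alpha>) = sets borel"
  by (simp add: dA_def)

lemma space_dA [simp]: "space (dA \<alpha>) = UNIV"
  by (simp add: dA_def)

lemma AE_dA_unit_disc: "AE z in dA \<alpha>. z \<in> ball 0 1"
  unfolding dA_def by (subst AE_density) (auto simp: indicator_def)

definition dA_moment :: "real \<Rightarrow> nat \<Rightarrow> real" where
  "dA_moment \<alpha> k = fact k * Gamma (\<alpha> + 2) / Gamma (real k + \<alpha> + 2)"

lemma dA_moment_pos: "\<alpha> > -1 \<Longrightarrow> dA_moment \<alpha> k > 0"
  unfolding dA_moment_def by (intro divide_pos_pos mult_pos_pos Gamma_real_pos) auto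

lemma dA_moment_0:
  assumes "\<alpha> > -1"
  shows "dA_moment \<alpha> 0 = 1"
proof -
  have "Gamma (\<alpha> + 2) > 0"
    using assms by (intro Gamma_real_pos) simp
  then show ?thesis
    by (simp add: dA_moment_def add.commute)
qed

lemma dA_moment_eq_Beta:
  assumes "\<alpha> > -1"
  shows "dA_moment \<alpha> k = (\<alpha> + 1) * Beta (real k + 1) (\<alpha> + 1)"
proof -
  have "\<alpha> + 1 \<notin> \<int>\<^sub>\<le>\<^sub>0"
    using assms nonpos_Ints_nonpos by fastforce
  then have "Gamma (\<alpha> + 2) = (\<alpha> + 1) * Gamma (\<alpha> + 1)"
    using Gamma_plus1[of "\<alpha> + 1"] by (simp add: add.assoc)
  moreover have "Gamma (real k + 1) = fact k"
    using Gamma_fact[of k] by (simp add: add.commute)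
  ultimately show ?thesis
    by (simp add: dA_moment_def Beta_def add_ac)
qed

lemma has_integral_Beta_power:
  assumes "\<alpha> > -1"
  shows "((\<lambda>s. s ^ k * (1 - s) powr \<alpha>) has_integral Beta (real k + 1) (\<alpha> + 1)) {0<..<1}"
proof -
  have "((\<lambda>s. s powr (real k + 1 - 1) * (1 - s) powr (\<alpha> + 1 - 1))
      has_integral Beta (real k + 1) (\<alpha> + 1)) {0<..<1}"
    using has_integral_Beta_real[of "real k + 1" "\<alpha> + 1"] assms
    by (simp only: has_integral_Icc_iff_Ioo)
  then show ?thesis
    by (rule has_integral_cong[THEN iffD1, rotated]) (simp add: powr_realpow)
qed

lemma nn_integral_dA_norm_power:
  assumes "\<alpha> > -1"
  shows "(\<integral>\<^sup>+z. ennreal ((cmod z) ^ (2 * k)) \<partial>dA \<alpha>) = ennreal (dA_moment \<alpha> k)"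
proof -
  let ?g = "\<lambda>s::real. (\<alpha> + 1) / pi * (s ^ k * (1 - s) powr \<alpha>)"
  have "(\<integral>\<^sup>+z. ennreal ((cmod z) ^ (2 * k)) \<partial>dA \<alpha>)
      = (\<integral>\<^sup>+z. ennreal (indicator (ball 0 1) z * ((\<alpha> + 1) * (1 - (cmod z)\<^sup>2) powr \<alpha> / pi))
          * ennreal ((cmod z) ^ (2 * k)) \<partial>lborel)"
    unfolding dA_def by (subst nn_integral_density) auto
  also have "\<dots> = (\<integral>\<^sup>+z. indicator (ball (0::complex) 1) z * ennreal (?g ((cmod z)\<^sup>2)) \<partial>lborel)"
  proof (intro nn_integral_cong)
    fix z :: complex
    have "0 \<le> (\<alpha> + 1) * (1 - (cmod z)\<^sup>2) powr \<alpha> / pi"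
      using assms by simp
    then show "ennreal (indicator (ball 0 1) z * ((\<alpha> + 1) * (1 - (cmod z)\<^sup>2) powr \<alpha> / pi))
        * ennreal ((cmod z) ^ (2 * k)) = indicator (ball 0 1) z * ennreal (?g ((cmod z)\<^sup>2))"
      by (simp add: indicator_def ennreal_mult[symmetric] power_mult power_mult_distrib power2_eq_square mult_ac)
  qed
  also have "\<dots> = ennreal pi * (\<integral>\<^sup>+s. indicator {0<..<1} s * ennreal (?g s) \<partial>lborel)"
    by (rule nn_integral_unit_disc_radial) measurable
  also have "(\<integral>\<^sup>+s. indicator {0<..<1} s * ennreal (?g s) \<partial>lborel)
      = (\<integral>\<^sup>+s. ennreal (indicator {0<..<1} s * ?g s) \<partial>lborel)"
    by (intro nn_integral_cong) (simp add: indicator_def)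
  also have "\<dots> = ennreal ((\<alpha> + 1) / pi * Beta (real k + 1) (\<alpha> + 1))"
    using assms by (intro nn_integral_has_integral_lebesgue has_integral_mult_right has_integral_Beta_power) auto
  also have "ennreal pi * ennreal ((\<alpha> + 1) / pi * Beta (real k + 1) (\<alpha> + 1))
      = ennreal (dA_moment \<alpha> k)"
    using assms by (simp add: dA_moment_eq_Beta ennreal_mult[symmetric] Beta_def)
  finally show ?thesis .
qed

lemma emeasure_dA_UNIV: "\<alpha> > -1 \<Longrightarrow> emeasure (dA \<alpha>) UNIV = 1"
  using nn_integral_dA_norm_power[of \<alpha> 0] by (simp add: dA_moment_0 nn_integral_const)

lemma finite_measure_dA: "\<alpha> > -1 \<Longrightarrow> finite_measure (dA \<alpha>)"
  by (rule finite_measureI) (simp add: emeasure_dA_UNIV)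

lemma has_bochner_integral_dA_norm_power:
  "\<alpha> > -1 \<Longrightarrow> has_bochner_integral (dA \<alpha>) (\<lambda>z. (cmod z) ^ (2 * k)) (dA_moment \<alpha> k)"
  using dA_moment_pos[of \<alpha> k] nn_integral_dA_norm_power[of \<alpha> k]
  by (intro has_bochner_integral_nn_integral) auto

lemma distr_dA_rotation:
  assumes "cmod w = 1"
  shows "distr (dA \<alpha>) (dA \<alpha>) (\<lambda>z. w * z) = dA \<alpha>"
proof (rule measure_eqI)
  fix A assume "A \<in> sets (distr (dA \<alpha>) (dA \<alpha>) (\<lambda>z. w * z))"
  then have [measurable]: "A \<in> sets borel" by simp
  have [measurable]: "(\<lambda>z. w * z) -` A \<in> sets borel"
    using measurable_sets[of "\<lambda>z. w * z" borel borel A] by simp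
  let ?\<rho> = "\<lambda>z. ennreal (indicator (ball 0 1) z * ((\<alpha> + 1) * (1 - (cmod z)\<^sup>2) powr \<alpha> / pi))"
  have "emeasure (distr (dA \<alpha>) (dA \<alpha>) (\<lambda>z. w * z)) A = emeasure (dA \<alpha>) ((\<lambda>z. w * z) -` A)"
    by (simp add: emeasure_distr)
  also have "\<dots> = (\<integral>\<^sup>+z. (\<lambda>u. ?\<rho> u * indicator A u) (w * z) \<partial>lborel)"
    unfolding dA_def using assms
    by (subst emeasure_density) (auto intro!: nn_integral_cong simp: norm_mult indicator_def)
  also have "\<dots> = (\<integral>\<^sup>+u. ?\<rho> u * indicator A u \<partial>lborel)"
    by (rule nn_integral_lborel_rotation[OF _ assms]) measurable
  also have "\<dots> = emeasure (dA \<alpha>) A"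
    unfolding dA_def by (subst emeasure_density) (auto simp: mult.commute)
  finally show "emeasure (distr (dA \<alpha>) (dA \<alpha>) (\<lambda>z. w * z)) A = emeasure (dA \<alpha>) A" .
qed simp

lemma integral_dA_rotation:
  fixes f :: "complex \<Rightarrow> complex"
  assumes "cmod w = 1" and [measurable]: "f \<in> borel_measurable borel"
  shows "(\<integral>z. f (w * z) \<partial>dA \<alpha>) = (\<integral>z. f z \<partial>dA \<alpha>)"
proof -
  have "(\<integral>z. f (w * z) \<partial>dA \<alpha>) = integral\<^sup>L (distr (dA \<alpha>) (dA \<alpha>) (\<lambda>z. w * z)) f"
    by (subst integral_distr) simp_all
  then show ?thesis
    by (simp only: distr_dA_rotation[OF assms(1)])
qed

lemma borel_measurable_monomial_cnj [measurable]:
  "(\<lambda>z::complex. z ^ n * cnj z ^ k) \<in> borel_measurable borel"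
  by (intro borel_measurable_continuous_onI continuous_intros)

text \<open>Rotating by \<open>w\<close> multiplies the integrand by \<open>w\<^sup>n (cnj w)\<^sup>k = cis ((n - k) \<theta>)\<close>, which is
  not \<open>1\<close> for \<open>\<theta> = \<pi> / (n + k + 2)\<close>, while the integral stays the same.\<close>
lemma integral_dA_ball_monomial_orthogonal:
  assumes "n \<noteq> k"
  shows "(\<integral>z. indicator (ball 0 r) z * (z ^ n * cnj z ^ k) \<partial>dA \<alpha>) = (0::complex)"
proof -
  define \<theta> where "\<theta> = pi / (real (n + k) + 2)"
  define w where "w = cis \<theta>"
  define \<omega> where "\<omega> = w ^ n * cnj w ^ k"
  have "\<theta> > 0"
    by (simp add: \<theta>_def)
  have "\<omega> = cis (real n * \<theta> + real k * (- \<theta>))"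
    unfolding \<omega>_def w_def cis_cnj Complex.DeMoivre by (rule cis_mult)
  also have "real n * \<theta> + real k * (- \<theta>) = (real n - real k) * \<theta>"
    by (simp add: algebra_simps)
  finally have "\<omega> = cis ((real n - real k) * \<theta>)" .
  moreover have "0 < \<bar>(real n - real k) * \<theta>\<bar>"
    using assms \<open>\<theta> > 0\<close> by (simp add: abs_mult)
  moreover have "\<bar>(real n - real k) * \<theta>\<bar> < pi"
  proof -
    have "\<bar>real n - real k\<bar> * \<theta> < (real (n + k) + 2) * \<theta>"
      using \<open>\<theta> > 0\<close> by (intro mult_strict_right_mono) auto
    then show ?thesis
      by (simp add: abs_mult \<theta>_def abs_of_pos \<open>\<theta> > 0\<close>)
  qed
  ultimately have "\<omega> \<noteq> 1"
    by (auto simp: complex_eq_iff sin_zero_pi_iff)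
  define f where "f z = indicator (ball 0 r) z * (z ^ n * cnj z ^ k)" for z :: complex
  have [measurable]: "f \<in> borel_measurable borel"
    unfolding f_def by measurable
  have "(\<integral>z. f z \<partial>dA \<alpha>) = (\<integral>z. f (w * z) \<partial>dA \<alpha>)"
    by (rule integral_dA_rotation[symmetric]) (simp_all add: w_def)
  also have "\<dots> = \<omega> * (\<integral>z. f z \<partial>dA \<alpha>)"
  proof -
    have "f (w * z) = \<omega> * f z" for z
      by (simp add: f_def \<omega>_def w_def norm_mult indicator_def power_mult_distrib)
    then show ?thesis by simp
  qed
  finally have "(1 - \<omega>) * (\<integral>z. f z \<partial>dA \<alpha>) = 0"
    by (simp add: algebra_simps)
  then show ?thesis
    using \<open>\<omega> \<noteq> 1\<close> by (simp add: f_def)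
qed

lemma borel_measurable_indicator_mult_continuous_on:
  fixes f :: "complex \<Rightarrow> complex"
  assumes "S \<in> sets borel" and "continuous_on S f"
  shows "(\<lambda>z. indicator S z * f z) \<in> borel_measurable borel"
proof -
  have "(\<lambda>z. indicator S z * f z) = (\<lambda>z. indicator S z *\<^sub>R f z)"
    by (auto simp: indicator_def)
  then show ?thesis
    using borel_measurable_continuous_on_indicator[OF assms] by simp
qed

lemma integrable_dA_indicator_mult_monomial:
  assumes "integrable (dA \<alpha>) (\<lambda>z. indicator (ball 0 1) z * g z)"
  shows "integrable (dA \<alpha>) (\<lambda>z. indicator (ball 0 1) z * (g z * z ^ j * cnj z ^ k))"
proof (rule Bochner_Integration.integrable_bound[OF assms])
  have [measurable]: "(\<lambda>z. indicator (ball 0 1) z * g z) \<in> borel_measurable borel"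
    using borel_measurable_integrable[OF assms] by simp
  have "(\<lambda>z. indicator (ball 0 1) z * (g z * z ^ j * cnj z ^ k))
      = (\<lambda>z. (indicator (ball 0 1) z * g z) * (z ^ j * cnj z ^ k))"
    by (simp add: mult_ac)
  then show "(\<lambda>z. indicator (ball 0 1) z * (g z * z ^ j * cnj z ^ k)) \<in> borel_measurable (dA \<alpha>)"
    by simp
  have "cmod z ^ j * cmod z ^ k \<le> 1" if "cmod z < 1" for z :: complex
    using that by (intro mult_le_one power_le_one) auto
  then show "AE z in dA \<alpha>. norm (indicator (ball 0 1) z * (g z * z ^ j * cnj z ^ k))
      \<le> norm (indicator (ball 0 1) z * g z)"
    by (intro AE_I2) (auto simp: indicator_def norm_mult norm_power mult.assoc mult_left_le)
qed

lemma integrable_dA_monomial: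
  assumes "\<alpha> > -1"
  shows "integrable (dA \<alpha>) (\<lambda>z. indicator (ball 0 1) z * (z ^ j * cnj z ^ k))"
proof -
  interpret finite_measure "dA \<alpha>"
    using assms by (rule finite_measure_dA)
  have "integrable (dA \<alpha>) (\<lambda>z. indicator (ball 0 1) z * (1::complex))"
    by (intro integrable_const_bound[where B=1]) (auto simp: indicator_def)
  from integrable_dA_indicator_mult_monomial[OF this, of j k] show ?thesis
    by simp
qed

lemma integral_dA_monomial:
  assumes "\<alpha> > -1"
  shows "(\<integral>z. indicator (ball 0 1) z * (z ^ j * cnj z ^ k) \<partial>dA \<alpha>)
       = (if j = k then complex_of_real (dA_moment \<alpha> k) else 0)"
proof (cases "j = k")
  case True
  have "z ^ k * cnj z ^ k = complex_of_real ((cmod z) ^ (2 * k))" for z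
  proof -
    have "z ^ k * cnj z ^ k = (z * cnj z) ^ k"
      by (simp add: power_mult_distrib)
    also have "\<dots> = complex_of_real ((cmod z) ^ (2 * k))"
      by (simp only: complex_norm_square[symmetric] of_real_power power_mult)
    finally show ?thesis .
  qed
  then have "(\<integral>z. indicator (ball 0 1) z * (z ^ k * cnj z ^ k) \<partial>dA \<alpha>)
      = (\<integral>z. complex_of_real ((cmod z) ^ (2 * k)) \<partial>dA \<alpha>)"
    by (intro integral_cong_AE) (auto intro: AE_mp[OF AE_dA_unit_disc])
  also have "\<dots> = complex_of_real (dA_moment \<alpha> k)"
    using has_bochner_integral_integral_eq[OF has_bochner_integral_dA_norm_power[OF assms]]
    by (simp only: integral_complex_of_real)
  finally show ?thesis
    using True by simp
qed (simp add: integral_dA_ball_monomial_orthogonal)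

lemma tendsto_integral_dA_discs:
  fixes f :: "complex \<Rightarrow> complex"
  assumes f: "integrable (dA \<alpha>) (\<lambda>z. indicator (ball 0 1) z * f z)"
    and "r \<longlonglongrightarrow> 1" and "\<And>n. r n \<le> 1"
  shows "(\<lambda>n. \<integral>z. indicator (ball 0 (r n)) z * f z \<partial>dA \<alpha>)
       \<longlonglongrightarrow> (\<integral>z. indicator (ball 0 1) z * f z \<partial>dA \<alpha>)"
proof -
  let ?f = "\<lambda>z. indicator (ball 0 1) z * f z"
  have restrict: "indicator (ball 0 (r n)) z * f z = indicator (ball 0 (r n)) z * ?f z" for n z
    using \<open>r n \<le> 1\<close> by (auto simp: indicator_def)
  have [measurable]: "?f \<in> borel_measurable borel"
    using borel_measurable_integrable[OF f] by simp
  have "(\<lambda>n. \<integral>z. indicator (ball 0 (r n)) z * ?f z \<partial>dA \<alpha>) \<longlonglongrightarrow> integral\<^sup>L (dA \<alpha>) ?f"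
  proof (rule integral_dominated_convergence[where w="\<lambda>z. norm (?f z)"])
    show "AE z in dA \<alpha>. (\<lambda>n. indicator (ball 0 (r n)) z * ?f z) \<longlonglongrightarrow> ?f z"
      using AE_dA_unit_disc
    proof eventually_elim
      case (elim z)
      then have "eventually (\<lambda>n. cmod z < r n) sequentially"
        using order_tendstoD(1)[OF \<open>r \<longlonglongrightarrow> 1\<close>] by simp
      then show ?case
        by (rule tendsto_eventually[OF eventually_mono]) simp
    qed
  qed (use f in \<open>auto simp: indicator_def\<close>)
  then show ?thesis
    by (simp only: restrict)
qed

section \<open>Taylor coefficients as inner products\<close>

lemma taylor_coeff_sums:
  assumes "h holomorphic_on ball 0 R" and "z \<in> ball 0 R"
  shows "(\<lambda>n. taylor_coeff h n * z ^ n) sums h z"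
  using holomorphic_power_series[OF assms] by (simp add: taylor_coeff_def)

lemma summable_norm_taylor_coeff:
  assumes "h holomorphic_on ball 0 R" and "0 \<le> r" and "r < R"
  shows "summable (\<lambda>n. cmod (taylor_coeff h n) * r ^ n)"
proof -
  define \<rho> where "\<rho> = (r + R) / 2"
  have "r < \<rho>" "\<rho> < R"
    using assms by (auto simp: \<rho>_def)
  then have "complex_of_real \<rho> \<in> ball 0 R"
    using assms by simp
  then have "summable (\<lambda>n. taylor_coeff h n * complex_of_real \<rho> ^ n)"
    using taylor_coeff_sums[OF assms(1)] sums_summable by blast
  then have "summable (\<lambda>n. norm (taylor_coeff h n * complex_of_real r ^ n))"
    by (rule powser_insidea) (use assms \<open>r < \<rho>\<close> in simp)
  then show ?thesis
    using assms by (simp add: norm_mult norm_power)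
qed

lemma suminf_if_add_eq:
  fixes c :: "nat \<Rightarrow> 'a::{t2_space, comm_monoid_add}"
  shows "(\<Sum>n. if n + j = k then c n else 0) = (if j \<le> k then c (k - j) else 0)"
proof (cases "j \<le> k")
  case True
  then have "(\<lambda>n. if n + j = k then c n else 0) = (\<lambda>n. if n = k - j then c n else 0)"
    by (intro ext) auto
  then show ?thesis
    using True sums_single[of "k - j" c] by (simp add: sums_iff)
qed simp

lemma integral_dA_disc_suminf:
  assumes "\<alpha> > -1" and "0 \<le> r" "r < 1" and summable_bound: "summable (\<lambda>n. cmod (c n) * r ^ n)"
  shows "(\<integral>z. (\<Sum>n. c n * (indicator (ball 0 r) z * (z ^ (n + j) * cnj z ^ k))) \<partial>dA \<alpha>)
       = (\<Sum>n. c n * (\<integral>z. indicator (ball 0 r) z * (z ^ (n + j) * cnj z ^ k) \<partial>dA \<alpha>))"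
proof -
  interpret finite_measure "dA \<alpha>"
    using assms(1) by (rule finite_measure_dA)
  define f where "f n z = c n * (indicator (ball 0 r) z * (z ^ (n + j) * cnj z ^ k))" for n z
  have f_bound: "norm (f n z) \<le> cmod (c n) * r ^ n" for n z
  proof (cases "z \<in> ball 0 r")
    case True
    then have "cmod z < r" by simp
    have "cmod z ^ (n + j) * cmod z ^ k = cmod z ^ n * (cmod z ^ j * cmod z ^ k)"
      by (simp add: power_add)
    also have "\<dots> \<le> cmod z ^ n"
      using \<open>cmod z < r\<close> \<open>r < 1\<close>
      by (intro mult_right_le_one_le mult_le_one power_le_one) auto
    also have "\<dots> \<le> r ^ n"
      using \<open>cmod z < r\<close> by (intro power_mono) auto
    finally show ?thesis
      using True by (simp add: f_def norm_mult norm_power mult_left_mono)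
  qed (use \<open>0 \<le> r\<close> in \<open>simp add: f_def\<close>)
  have [measurable]: "f n \<in> borel_measurable borel" for n
    unfolding f_def by measurable
  have f_integrable: "integrable (dA \<alpha>) (f n)" for n
    by (rule integrable_const_bound[where B="cmod (c n) * r ^ n"]) (simp_all add: f_bound)
  have "(\<integral>z. (\<Sum>n. f n z) \<partial>dA \<alpha>) = (\<Sum>n. integral\<^sup>L (dA \<alpha>) (f n))"
  proof (rule integral_suminf[OF f_integrable])
    show "AE z in dA \<alpha>. summable (\<lambda>n. norm (f n z))"
      by (intro AE_I2 summable_comparison_test[OF _ summable_bound]) (auto simp: f_bound)
    have "(\<integral>z. norm (f n z) \<partial>dA \<alpha>) \<le> cmod (c n) * r ^ n" for n
      using integral_mono[of "dA \<alpha>" "\<lambda>z. norm (f n z)" "\<lambda>_. cmod (c n) * r ^ n"]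
        f_integrable f_bound emeasure_dA_UNIV[OF assms(1)]
      by (simp add: measure_def)
    then show "summable (\<lambda>n. \<integral>z. norm (f n z) \<partial>dA \<alpha>)"
      by (intro summable_comparison_test[OF _ summable_bound]) auto
  qed
  moreover have "integral\<^sup>L (dA \<alpha>) (f n)
      = c n * (\<integral>z. indicator (ball 0 r) z * (z ^ (n + j) * cnj z ^ k) \<partial>dA \<alpha>)" for n
    unfolding f_def by simp
  ultimately show ?thesis
    by (simp only: f_def)
qed

text \<open>On a smaller disc the Taylor series is dominated by a convergent numerical series, so it
  may be integrated termwise; by orthogonality only the term with \<open>n + j = k\<close> survives.\<close>
lemma integral_dA_holomorphic_monomial_disc:
  assumes "\<alpha> > -1" and h: "h holomorphic_on ball 0 1" and "0 \<le> r" "r < 1"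
  shows "(\<integral>z. indicator (ball 0 r) z * (h z * z ^ j * cnj z ^ k) \<partial>dA \<alpha>)
       = (if j \<le> k then taylor_coeff h (k - j) *
            (\<integral>z. indicator (ball 0 r) z * (z ^ k * cnj z ^ k) \<partial>dA \<alpha>) else 0)"
proof -
  define c where "c = taylor_coeff h"
  define T where "T = (\<integral>z. indicator (ball 0 r) z * (z ^ k * cnj z ^ k) \<partial>dA \<alpha>)"
  have "(\<lambda>n. c n * (indicator (ball 0 r) z * (z ^ (n + j) * cnj z ^ k)))
      sums (indicator (ball 0 r) z * (h z * z ^ j * cnj z ^ k))" for z
  proof (cases "z \<in> ball 0 r")
    case True
    then have "z \<in> ball 0 1"
      using \<open>r < 1\<close> by simp
    from sums_mult2[OF taylor_coeff_sums[OF h this], of "z ^ j * cnj z ^ k"] show ?thesis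
      using True by (simp add: c_def power_add mult_ac)
  qed simp
  then have "(\<integral>z. indicator (ball 0 r) z * (h z * z ^ j * cnj z ^ k) \<partial>dA \<alpha>)
      = (\<integral>z. (\<Sum>n. c n * (indicator (ball 0 r) z * (z ^ (n + j) * cnj z ^ k))) \<partial>dA \<alpha>)"
    by (simp add: sums_iff)
  also have "\<dots> = (\<Sum>n. c n * (\<integral>z. indicator (ball 0 r) z * (z ^ (n + j) * cnj z ^ k) \<partial>dA \<alpha>))"
    using assms(1,3,4) summable_norm_taylor_coeff[OF h assms(3,4)]
    by (intro integral_dA_disc_suminf) (simp_all add: c_def)
  also have "\<dots> = (\<Sum>n. if n + j = k then c n * T else 0)"
  proof -
    have "c n * (\<integral>z. indicator (ball 0 r) z * (z ^ (n + j) * cnj z ^ k) \<partial>dA \<alpha>)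
        = (if n + j = k then c n * T else 0)" for n
      by (cases "n + j = k") (simp_all add: T_def integral_dA_ball_monomial_orthogonal)
    then show ?thesis
      by simp
  qed
  also have "\<dots> = (if j \<le> k then c (k - j) * T else 0)"
    by (rule suminf_if_add_eq)
  finally show ?thesis
    by (simp add: c_def T_def)
qed

lemma integral_dA_holomorphic_monomial:
  assumes "\<alpha> > -1" and h: "h holomorphic_on ball 0 1"
    and h_integrable: "integrable (dA \<alpha>) (\<lambda>z. indicator (ball 0 1) z * h z)"
  shows "(\<integral>z. indicator (ball 0 1) z * (h z * z ^ j * cnj z ^ k) \<partial>dA \<alpha>)
       = (if j \<le> k then taylor_coeff h (k - j) * complex_of_real (dA_moment \<alpha> k) else 0)"
proof -
  define r where "r n = 1 - inverse (real (Suc n))" for n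
  have r: "r \<longlonglongrightarrow> 1" "0 \<le> r n" "r n < 1" for n
    using LIMSEQ_inverse_real_of_nat_add_minus[of 1] unfolding r_def
    by (simp_all add: field_simps)
  have "(\<lambda>n. \<integral>z. indicator (ball 0 (r n)) z * (z ^ k * cnj z ^ k) \<partial>dA \<alpha>)
      \<longlonglongrightarrow> complex_of_real (dA_moment \<alpha> k)"
    using tendsto_integral_dA_discs[OF integrable_dA_monomial[OF assms(1), of k k] r(1)] r(3)
    by (simp add: integral_dA_monomial[OF assms(1)] less_imp_le)
  then have "(\<lambda>n. \<integral>z. indicator (ball 0 (r n)) z * (h z * z ^ j * cnj z ^ k) \<partial>dA \<alpha>)
      \<longlonglongrightarrow> (if j \<le> k then taylor_coeff h (k - j) * complex_of_real (dA_moment \<alpha> k) else 0)"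
    by (simp add: integral_dA_holomorphic_monomial_disc[OF assms(1) h r(2,3)] tendsto_mult_left)
  moreover have "(\<lambda>n. \<integral>z. indicator (ball 0 (r n)) z * (h z * z ^ j * cnj z ^ k) \<partial>dA \<alpha>)
      \<longlonglongrightarrow> (\<integral>z. indicator (ball 0 1) z * (h z * z ^ j * cnj z ^ k) \<partial>dA \<alpha>)"
    by (rule tendsto_integral_dA_discs[OF integrable_dA_indicator_mult_monomial[OF h_integrable] r(1)])
      (simp add: r(3) less_imp_le)
  ultimately show ?thesis
    using LIMSEQ_unique by blast
qed

section \<open>Test functions spanned by two monomials\<close>

lemma integrable_multiplier_of_wcomp_bergman:
  assumes "\<alpha> > -1" and \<psi>: "\<psi> holomorphic_on ball 0 1"
    and maps: "\<forall>f\<in>bergman \<alpha>. wcomp \<psi> \<phi> f \<in> bergman \<alpha>"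
    and self_map: "\<And>z. z \<in> ball 0 1 \<Longrightarrow> \<phi> z \<in> ball 0 1"
  shows "integrable (dA \<alpha>) (\<lambda>z. indicator (ball 0 1) z * \<psi> z)"
proof -
  interpret finite_measure "dA \<alpha>"
    using assms(1) by (rule finite_measure_dA)
  define one where "one z = (indicator (ball 0 1) z :: complex)" for z :: complex
  have "one holomorphic_on ball 0 1"
    by (subst holomorphic_cong[of _ _ _ "\<lambda>_. 1"]) (auto simp: one_def)
  moreover have "integrable (dA \<alpha>) (\<lambda>z. (cmod (one z))\<^sup>2)"
    by (rule integrable_const_bound[where B=1]) (auto simp: one_def indicator_def)
  ultimately have "wcomp \<psi> \<phi> one \<in> bergman \<alpha>"
    using maps by (simp add: bergman_def)
  then have "integrable (dA \<alpha>) (\<lambda>z. indicator (ball 0 1) z *\<^sub>R (cmod (\<psi> z * one (\<phi> z)))\<^sup>2)"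
    by (intro integrable_mult_indicator) (auto simp: bergman_def wcomp_def)
  moreover have "indicator (ball 0 1) z *\<^sub>R (cmod (\<psi> z * one (\<phi> z)))\<^sup>2
      = indicator (ball 0 1) z * (cmod (\<psi> z))\<^sup>2" for z
    using self_map[of z] by (simp add: one_def indicator_def)
  ultimately have square_integrable: "integrable (dA \<alpha>) (\<lambda>z. indicator (ball 0 1) z * (cmod (\<psi> z))\<^sup>2)"
    by (simp only:)
  show ?thesis
  proof (rule Bochner_Integration.integrable_bound)
    show "integrable (dA \<alpha>) (\<lambda>z. 1 + indicator (ball 0 1) z * (cmod (\<psi> z))\<^sup>2)"
      using square_integrable by simp
    show "(\<lambda>z. indicator (ball 0 1) z * \<psi> z) \<in> borel_measurable (dA \<alpha>)"
      using borel_measurable_indicator_mult_continuous_on[OF _ holomorphic_on_imp_continuous_on[OF \<psi>]]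
      by simp
    have "t \<le> 1 + t\<^sup>2" for t :: real
    proof -
      have "0 \<le> (t - 1/2)\<^sup>2" by simp
      then show ?thesis by (simp add: power2_eq_square algebra_simps)
    qed
    then show "AE z in dA \<alpha>. norm (indicator (ball 0 1) z * \<psi> z)
        \<le> norm (1 + indicator (ball 0 1) z * (cmod (\<psi> z))\<^sup>2)"
      by (intro AE_I2) (auto simp: indicator_def)
  qed
qed

text \<open>The monomial \<open>e\<^sub>k\<close> is cut off outside the disc so that its products with \<open>\<psi>\<close>, which is
  arbitrary there, are measurable.\<close>
definition unit_monomial :: "real \<Rightarrow> nat \<Rightarrow> complex \<Rightarrow> complex" where
  "unit_monomial \<alpha> k z = indicator (ball 0 1) z * z ^ k / complex_of_real (sqrt (dA_moment \<alpha> k))"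

lemma has_bochner_integral_unit_monomial:
  assumes "\<alpha> > -1"
  shows "has_bochner_integral (dA \<alpha>) (\<lambda>z. unit_monomial \<alpha> j z * cnj (unit_monomial \<alpha> k z))
      (if j = k then 1 else 0)"
proof -
  have "unit_monomial \<alpha> j z * cnj (unit_monomial \<alpha> k z)
      = indicator (ball 0 1) z * (z ^ j * cnj z ^ k)
          / complex_of_real (sqrt (dA_moment \<alpha> j) * sqrt (dA_moment \<alpha> k))" for z
    by (simp add: unit_monomial_def indicator_def)
  moreover have "complex_of_real (sqrt (dA_moment \<alpha> k)) * complex_of_real (sqrt (dA_moment \<alpha> k))
      = complex_of_real (dA_moment \<alpha> k)"
    using dA_moment_pos[OF assms, of k] by (simp flip: of_real_mult)
  ultimately show ?thesis
    using integrable_dA_monomial[OF assms, of j k] dA_moment_pos[OF assms, of k]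
    by (simp add: has_bochner_integral_iff integral_dA_monomial[OF assms])
qed

lemma has_bochner_integral_wcomp_dilation_unit_monomial:
  assumes "\<alpha> > -1" and "cmod l \<le> 1" and \<psi>: "\<psi> holomorphic_on ball 0 1"
    and \<psi>_integrable: "integrable (dA \<alpha>) (\<lambda>z. indicator (ball 0 1) z * \<psi> z)"
  shows "has_bochner_integral (dA \<alpha>)
      (\<lambda>z. wcomp \<psi> (\<lambda>z. l * z) (unit_monomial \<alpha> j) z * cnj (unit_monomial \<alpha> k z))
      (if j \<le> k then l ^ j * taylor_coeff \<psi> (k - j)
          * complex_of_real (sqrt (dA_moment \<alpha> k / dA_moment \<alpha> j)) else 0)"
proof -
  let ?d = "complex_of_real (sqrt (dA_moment \<alpha> j) * sqrt (dA_moment \<alpha> k))"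
  have "wcomp \<psi> (\<lambda>z. l * z) (unit_monomial \<alpha> j) z * cnj (unit_monomial \<alpha> k z)
      = l ^ j / ?d * (indicator (ball 0 1) z * (\<psi> z * z ^ j * cnj z ^ k))" for z
  proof (cases "z \<in> ball 0 1")
    case True
    have "cmod l * cmod z \<le> cmod z"
      using \<open>cmod l \<le> 1\<close> by (simp add: mult_left_le_one_le)
    then have "l * z \<in> ball 0 1"
      using True by (simp add: norm_mult)
    then show ?thesis
      using True by (simp add: wcomp_def unit_monomial_def power_mult_distrib)
  qed (simp add: wcomp_def unit_monomial_def)
  moreover have "complex_of_real (sqrt (dA_moment \<alpha> k / dA_moment \<alpha> j)) = complex_of_real (dA_moment \<alpha> k) / ?d"
    using dA_moment_pos[OF assms(1), of j] dA_moment_pos[OF assms(1), of k]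
    by (simp add: real_sqrt_divide field_simps flip: of_real_mult of_real_divide)
  ultimately show ?thesis
    using integrable_dA_indicator_mult_monomial[OF \<psi>_integrable, of j k]
    by (simp add: has_bochner_integral_iff integral_dA_holomorphic_monomial[OF assms(1) \<psi> \<psi>_integrable]
        del: of_real_mult)
qed

lemma has_bochner_integral_mult_cnj_combination:
  fixes f1 f2 g1 g2 :: "'a \<Rightarrow> complex"
  assumes "has_bochner_integral M (\<lambda>x. f1 x * cnj (g1 x)) I11"
    and "has_bochner_integral M (\<lambda>x. f1 x * cnj (g2 x)) I12"
    and "has_bochner_integral M (\<lambda>x. f2 x * cnj (g1 x)) I21"
    and "has_bochner_integral M (\<lambda>x. f2 x * cnj (g2 x)) I22"
  shows "has_bochner_integral M (\<lambda>x. (a * f1 x + b * f2 x) * cnj (c * g1 x + d * g2 x))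
      (a * cnj c * I11 + a * cnj d * I12 + b * cnj c * I21 + b * cnj d * I22)"
proof -
  have "(a * f1 x + b * f2 x) * cnj (c * g1 x + d * g2 x)
      = a * cnj c * (f1 x * cnj (g1 x)) + a * cnj d * (f1 x * cnj (g2 x))
        + b * cnj c * (f2 x * cnj (g1 x)) + b * cnj d * (f2 x * cnj (g2 x))" for x
    by (simp add: algebra_simps)
  then show ?thesis
    using assms by (simp add: has_bochner_integral_add has_bochner_integral_mult_right)
qed

lemma
  assumes "f holomorphic_on ball 0 1"
    and "has_bochner_integral (dA \<alpha>) (\<lambda>z. f z * cnj (f z)) (complex_of_real I)"
  shows bergman_of_has_bochner_integral_mult_cnj: "f \<in> bergman \<alpha>"
    and bnorm_of_has_bochner_integral_mult_cnj: "bnorm \<alpha> f = sqrt I"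
proof -
  have "has_bochner_integral (dA \<alpha>) (\<lambda>z. Re (f z * cnj (f z))) (Re (complex_of_real I))"
    using assms(2) by (rule has_bochner_integral_bounded_linear[OF bounded_linear_Re])
  then have "has_bochner_integral (dA \<alpha>) (\<lambda>z. (cmod (f z))\<^sup>2) I"
    by (simp add: complex_mult_cnj cmod_power2)
  then show "f \<in> bergman \<alpha>" "bnorm \<alpha> f = sqrt I"
    using assms(1) by (auto simp: bergman_def bnorm_def has_bochner_integral_iff)
qed

lemma numrange_wcomp_dilation_mem:
  assumes "\<alpha> > -1" and "cmod l \<le> 1" and \<psi>: "\<psi> holomorphic_on ball 0 1" and "\<psi> 0 = 0"
    and \<psi>_integrable: "integrable (dA \<alpha>) (\<lambda>z. indicator (ball 0 1) z * \<psi> z)"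
    and "m \<ge> 2" and ab: "(cmod a)\<^sup>2 + (cmod b)\<^sup>2 = 1"
  shows "a * cnj b * (l * taylor_coeff \<psi> (m - 1) * complex_of_real (sqrt (dA_moment \<alpha> m / dA_moment \<alpha> 1)))
      \<in> numrange \<alpha> (wcomp \<psi> (\<lambda>z. l * z))"
proof -
  define F where "F z = a * unit_monomial \<alpha> 1 z + b * unit_monomial \<alpha> m z" for z
  have "taylor_coeff \<psi> 0 = 0"
    using \<open>\<psi> 0 = 0\<close> by (simp add: taylor_coeff_def)
  note orthonormal = has_bochner_integral_unit_monomial[OF assms(1)]
  note matrix = has_bochner_integral_wcomp_dilation_unit_monomial[OF assms(1,2) \<psi> \<psi>_integrable]
  have F_norm: "has_bochner_integral (dA \<alpha>) (\<lambda>z. F z * cnj (F z)) (complex_of_real 1)"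
    using has_bochner_integral_mult_cnj_combination[OF orthonormal[of 1 1] orthonormal[of 1 m]
        orthonormal[of m 1] orthonormal[of m m], of a b a b] \<open>m \<ge> 2\<close> ab
    by (simp add: F_def complex_mult_cnj cmod_power2 flip: of_real_add)
  have F_holomorphic: "F holomorphic_on ball 0 1"
  proof -
    have "(\<lambda>z. a * z / complex_of_real (sqrt (dA_moment \<alpha> 1))
        + b * z ^ m / complex_of_real (sqrt (dA_moment \<alpha> m))) holomorphic_on ball 0 1"
      using dA_moment_pos[OF assms(1)] by (intro holomorphic_intros) auto
    then show ?thesis
      by (rule holomorphic_cong[THEN iffD1, rotated 2]) (simp_all add: F_def unit_monomial_def)
  qed
  have "wcomp \<psi> (\<lambda>z. l * z) F
      = (\<lambda>z. a * wcomp \<psi> (\<lambda>z. l * z) (unit_monomial \<alpha> 1) z + b * wcomp \<psi> (\<lambda>z. l * z) (unit_monomial \<alpha> m) z)"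
    by (simp add: wcomp_def F_def fun_eq_iff algebra_simps)
  then have "binner \<alpha> (wcomp \<psi> (\<lambda>z. l * z) F) F
      = a * cnj b * (l * taylor_coeff \<psi> (m - 1) * complex_of_real (sqrt (dA_moment \<alpha> m / dA_moment \<alpha> 1)))"
    using has_bochner_integral_mult_cnj_combination[OF matrix[of 1 1] matrix[of 1 m]
        matrix[of m 1] matrix[of m m], of a b a b]
      \<open>m \<ge> 2\<close> \<open>taylor_coeff \<psi> 0 = 0\<close>
    by (simp add: binner_def F_def has_bochner_integral_iff)
  moreover have "F \<in> bergman \<alpha>"
    by (rule bergman_of_has_bochner_integral_mult_cnj[OF F_holomorphic F_norm])
  moreover have "bnorm \<alpha> F = 1"
    using bnorm_of_has_bochner_integral_mult_cnj[OF F_holomorphic F_norm] by simp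
  ultimately show ?thesis
    unfolding numrange_def by force
qed

text \<open>For \<open>K \<noteq> 0\<close> take \<open>a = A > 0\<close> and \<open>b = cnj (v / K) / A\<close>; the normalisation
  \<open>A\<^sup>2 + t\<^sup>2 / A\<^sup>2 = 1\<close> with \<open>t = |v / K| \<le> 1/2\<close> asks for a root \<open>A\<^sup>2 = (1 + sqrt (1 - 4 t\<^sup>2)) / 2\<close>
  of \<open>x\<^sup>2 - x + t\<^sup>2\<close>.\<close>
lemma exists_unit_pair_mult_cnj_eq:
  fixes v K :: complex
  assumes "cmod v \<le> cmod K / 2"
  shows "\<exists>a b. (cmod a)\<^sup>2 + (cmod b)\<^sup>2 = 1 \<and> a * cnj b * K = v"
proof (cases "K = 0")
  case True
  then show ?thesis
    using assms by (intro exI[of _ 1] exI[of _ 0]) simp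
next
  case False
  define t where "t = cmod (v / K)"
  have "0 \<le> t" "t \<le> 1/2"
    using assms False by (auto simp: t_def norm_divide field_simps)
  then have "4 * t\<^sup>2 \<le> 1"
    using power_mono[of t "1/2" 2] by (simp add: power_divide)
  define s where "s = sqrt (1 - 4 * t\<^sup>2)"
  define A where "A = sqrt ((1 + s) / 2)"
  have "s \<ge> 0" "s\<^sup>2 = 1 - 4 * t\<^sup>2"
    using \<open>4 * t\<^sup>2 \<le> 1\<close> by (simp_all add: s_def)
  then have "A > 0" "A\<^sup>2 = (1 + s) / 2"
    by (simp_all add: A_def add_pos_nonneg)
  have root: "A\<^sup>2 * A\<^sup>2 - A\<^sup>2 + t\<^sup>2 = 0"
  proof -
    have "A\<^sup>2 * A\<^sup>2 - A\<^sup>2 + t\<^sup>2 = (s\<^sup>2 - (1 - 4 * t\<^sup>2)) / 4"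
      unfolding \<open>A\<^sup>2 = (1 + s) / 2\<close> by (simp add: power2_eq_square field_simps)
    then show ?thesis
      using \<open>s\<^sup>2 = 1 - 4 * t\<^sup>2\<close> by simp
  qed
  have "cmod (cnj (v / K) / complex_of_real A) = t / A"
    using \<open>A > 0\<close> by (simp only: norm_divide complex_mod_cnj norm_of_real abs_of_pos t_def)
  then have "(cmod (complex_of_real A))\<^sup>2 + (cmod (cnj (v / K) / complex_of_real A))\<^sup>2 = A\<^sup>2 + t\<^sup>2 / A\<^sup>2"
    using \<open>A > 0\<close> by (simp add: power_divide)
  also have "\<dots> = 1"
    using \<open>A > 0\<close> root by (simp add: field_simps)
  finally have "(cmod (complex_of_real A))\<^sup>2 + (cmod (cnj (v / K) / complex_of_real A))\<^sup>2 = 1" .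
  moreover have "complex_of_real A * cnj (cnj (v / K) / complex_of_real A) * K = v"
    using \<open>A > 0\<close> False by simp
  ultimately show ?thesis
    by blast
qed

lemma dA_moment_ratio:
  assumes "\<alpha> > -1"
  shows "dA_moment \<alpha> m / dA_moment \<alpha> 1 = fact m * Gamma (\<alpha> + 3) / Gamma (real m + \<alpha> + 2)"
proof -
  have "Gamma (\<alpha> + 2) > 0" "Gamma (\<alpha> + 3) > 0" "Gamma (real m + \<alpha> + 2) > 0"
    using assms by (auto intro!: Gamma_real_pos)
  moreover have "real 1 + \<alpha> + 2 = \<alpha> + 3"
    by simp
  ultimately show ?thesis
    unfolding dA_moment_def by (simp add: field_simps)
qed

theorem theorem5p2:
  fixes \<alpha> :: real and l :: complex and \<psi> :: "complex \<Rightarrow> complex" and m :: nat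
  assumes "\<alpha> > -1"
    and "l \<noteq> 0" and "cmod l \<le> 1"
    and "\<psi> holomorphic_on ball 0 1" and "\<psi> 0 = 0"
    and "wcomp_bounded \<alpha> \<psi> (\<lambda>z. l * z)"
    and "m \<ge> 2"
  shows "cball 0 ((1/2) * sqrt (fact m * Gamma (\<alpha> + 3) / Gamma (real m + \<alpha> + 2))
                   * cmod (l * taylor_coeff \<psi> (m - 1)))
         \<subseteq> numrange \<alpha> (wcomp \<psi> (\<lambda>z. l * z))"
proof
  fix v :: complex
  assume v: "v \<in> cball 0 ((1/2) * sqrt (fact m * Gamma (\<alpha> + 3) / Gamma (real m + \<alpha> + 2))
                   * cmod (l * taylor_coeff \<psi> (m - 1)))"
  define K where "K = l * taylor_coeff \<psi> (m - 1) * complex_of_real (sqrt (dA_moment \<alpha> m / dA_moment \<alpha> 1))"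
  have "0 < fact m * Gamma (\<alpha> + 3) / Gamma (real m + \<alpha> + 2)"
    using dA_moment_pos[OF assms(1), of m] dA_moment_pos[OF assms(1), of 1]
    by (simp flip: dA_moment_ratio[OF assms(1)])
  then have "cmod v \<le> cmod K / 2"
    using v unfolding K_def dA_moment_ratio[OF assms(1)] by (simp add: norm_mult mult_ac)
  then obtain a b where "(cmod a)\<^sup>2 + (cmod b)\<^sup>2 = 1" "v = a * cnj b * K"
    using exists_unit_pair_mult_cnj_eq by metis
  moreover have "integrable (dA \<alpha>) (\<lambda>z. indicator (ball 0 1) z * \<psi> z)"
    using assms(6) \<open>cmod l \<le> 1\<close>
    by (intro integrable_multiplier_of_wcomp_bergman[OF assms(1,4), where \<phi>="\<lambda>z. l * z"])
      (auto simp: wcomp_bounded_def norm_mult intro: mult_left_le_one_le[THEN le_less_trans])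
  ultimately show "v \<in> numrange \<alpha> (wcomp \<psi> (\<lambda>z. l * z))"
    unfolding K_def using numrange_wcomp_dilation_mem[OF assms(1,3,4,5)] \<open>m \<ge> 2\<close> by simp
qed

end
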